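(* Let $\Gamma$ be a metrized graph that is a tree with $v$ vertices. Then $$W(\Gamma)=\frac{2v-1}{4}\,\ell(\Gamma)+ \frac{1}{8} \sum_{p, q \in V(\Gamma)} \mathrm{val}(p)\, \mathrm{val}(q)\, r(p,q).$$ In particular, if each edge length is equal to $1$, $$W(\Gamma)=\frac{(2v-1)(v-1)}{4}+ \frac{1}{8} \sum_{p, q \in V(\Gamma)} \mathrm{val}(p)\,\mathrm{val}(q)\, r(p,q).$$
   Context: A metrized graph is a finite connected graph each of whose edges is identified with a closed segment of positive length; its vertex set $V(\Gamma)$ is a finite nonempty set containing every point of valence $\neq 2$, and $v=\#V(\Gamma)$. $\mathrm{val}(p)$ is the valence of $p$ (number of directions emanating from $p$). $\ell(\Gamma)$ is the total length (sum of edge lengths). $r(p,q)$ is the effective resistance between $p$ and $q$ (edges as resistors with resistance equal to their lengths); on a tree it equals the path distance $d(p,q)$. The Wiener index is $W(\Gamma)=\frac12\sum_{p,q\in V(\Gamma)}d(p,q)$. *)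

theory Defs
  imports Main "HOL-Library.Multiset" Complex_Main
begin

definition metrized_graph :: "'a set \<Rightarrow> 'a set set \<Rightarrow> ('a set \<Rightarrow> real) \<Rightarrow> bool" where
  "metrized_graph V E len \<longleftrightarrow> finite V \<and> V \<noteq> {} \<and>
     (\<forall>e\<in>E. e \<subseteq> V \<and> card e = 2 \<and> len e > 0)"

definition is_walk :: "'a set set \<Rightarrow> 'a list \<Rightarrow> bool" where
  "is_walk E xs \<longleftrightarrow> xs \<noteq> [] \<and> (\<forall>i. Suc i < length xs \<longrightarrow> {xs ! i, xs ! Suc i} \<in> E)"

definition is_path :: "'a set set \<Rightarrow> 'a \<Rightarrow> 'a \<Rightarrow> 'a list \<Rightarrow> bool" where
  "is_path E p q xs \<longleftrightarrow> is_walk E xs \<and> distinct xs \<and> hd xs = p \<and> last xs = q"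

definition connected_graph :: "'a set \<Rightarrow> 'a set set \<Rightarrow> bool" where
  "connected_graph V E \<longleftrightarrow> (\<forall>p\<in>V. \<forall>q\<in>V. \<exists>xs. is_path E p q xs)"

definition acyclic_graph :: "'a set set \<Rightarrow> bool" where
  "acyclic_graph E \<longleftrightarrow> \<not> (\<exists>xs. length xs \<ge> 3 \<and> distinct xs \<and> is_walk E xs \<and> {last xs, hd xs} \<in> E)"

definition is_tree :: "'a set \<Rightarrow> 'a set set \<Rightarrow> bool" where
  "is_tree V E \<longleftrightarrow> connected_graph V E \<and> acyclic_graph E"

definition path_length :: "('a set \<Rightarrow> real) \<Rightarrow> 'a list \<Rightarrow> real" where
  "path_length len xs = (\<Sum>i<length xs - 1. len {xs ! i, xs ! Suc i})"

definition dist_graph :: "'a set set \<Rightarrow> ('a set \<Rightarrow> real) \<Rightarrow> 'a \<Rightarrow> 'a \<Rightarrow> real" where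
  "dist_graph E len p q = Inf {path_length len xs | xs. is_path E p q xs}"

text \<open>On a tree the effective resistance equals the path distance.\<close>
definition resistance_tree :: "'a set set \<Rightarrow> ('a set \<Rightarrow> real) \<Rightarrow> 'a \<Rightarrow> 'a \<Rightarrow> real" where
  "resistance_tree E len p q = dist_graph E len p q"

definition valence :: "'a set set \<Rightarrow> 'a \<Rightarrow> nat" where
  "valence E p = card {e\<in>E. p \<in> e}"

definition total_length :: "'a set set \<Rightarrow> ('a set \<Rightarrow> real) \<Rightarrow> real" where
  "total_length E len = (\<Sum>e\<in>E. len e)"

definition wiener_index :: "'a set \<Rightarrow> 'a set set \<Rightarrow> ('a set \<Rightarrow> real) \<Rightarrow> real" where
  "wiener_index V E len = (1/2) * (\<Sum>p\<in>V. \<Sum>q\<in>V. dist_graph E len p q)"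

end

theory Submission
  imports Defs
begin

text \<open>Removing a leaf x, attached to y by an edge of length L, leaves all other distances unchanged,
  and every distance from x exceeds the corresponding distance from y by exactly L. Induction over
  leaves therefore gives #E = v - 1 and, for every vertex p, the identity
  sum over edges {a,b} of (r(p,a) + r(p,b)) = 2 sum_q r(p,q) - l(Gamma).
  By double counting its left-hand side is sum_q val(q) r(p,q). Weighting the identity once more
  with val(p), and using the symmetry of r together with sum_p val(p) = 2(v - 1), expresses the
  double sum of the theorem as 8 W(Gamma) - (4v - 2) l(Gamma).\<close>

lemma is_walk_mono: "is_walk E xs \<Longrightarrow> E \<subseteq> E' \<Longrightarrow> is_walk E' xs"
  unfolding is_walk_def by blast

lemma is_walk_rev: "is_walk E xs \<Longrightarrow> is_walk E (rev xs)"
  unfolding is_walk_def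
proof (intro conjI allI impI)
  fix i assume w: "xs \<noteq> [] \<and> (\<forall>i. Suc i < length xs \<longrightarrow> {xs ! i, xs ! Suc i} \<in> E)"
    and i: "Suc i < length (rev xs)"
  let ?n = "length xs"
  have "{xs ! (?n - Suc (Suc i)), xs ! Suc (?n - Suc (Suc i))} \<in> E" using w i by simp
  moreover have "Suc (?n - Suc (Suc i)) = ?n - Suc i" using i by simp
  ultimately show "{rev xs ! i, rev xs ! Suc i} \<in> E" using i
    by (simp add: rev_nth insert_commute)
qed auto

lemma is_walk_snoc:
  assumes "is_walk E xs" "{last xs, z} \<in> E"
  shows "is_walk E (xs @ [z])"
  unfolding is_walk_def
proof (intro conjI allI impI)
  fix i assume "Suc i < length (xs @ [z])"
  then consider "Suc i < length xs" | "Suc i = length xs" by fastforce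
  then show "{(xs @ [z]) ! i, (xs @ [z]) ! Suc i} \<in> E"
  proof cases
    case 1
    then show ?thesis using assms(1) by (simp add: nth_append is_walk_def)
  next
    case 2
    then show ?thesis using assms by (auto simp: nth_append is_walk_def last_conv_nth simp flip: 2)
  qed
qed simp

lemma is_walk_drop: "is_walk E xs \<Longrightarrow> i < length xs \<Longrightarrow> is_walk E (drop i xs)"
  unfolding is_walk_def by auto

lemma is_walk_Cons:
  "is_walk E (x # ys) \<longleftrightarrow> ys = [] \<or> {x, hd ys} \<in> E \<and> is_walk E ys"
  unfolding is_walk_def
  by (cases ys) (auto simp: less_Suc_eq_0_disj)

lemma is_walk_set_subset:
  assumes "is_walk E xs" "length xs \<ge> 2" "\<forall>e\<in>E. e \<subseteq> V"
  shows "set xs \<subseteq> V"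
proof
  fix z assume "z \<in> set xs"
  then obtain i where i: "i < length xs" "xs ! i = z" by (auto simp: in_set_conv_nth)
  show "z \<in> V"
  proof (cases "Suc i < length xs")
    case True
    then show ?thesis using assms(1,3) i unfolding is_walk_def by blast
  next
    case False
    then have "Suc (i - 1) < length xs" "Suc (i - 1) = i" using assms(2) i by auto
    then show ?thesis using assms(1,3) i unfolding is_walk_def by (metis insert_subset)
  qed
qed

lemma is_path_rev: "is_path E p q xs \<Longrightarrow> is_path E q p (rev xs)"
  unfolding is_path_def by (metis distinct_rev hd_rev is_walk_rev last_rev)

lemma is_path_same_iff: "is_path E p p xs \<longleftrightarrow> xs = [p]"
proof
  assume "is_path E p p xs"
  then have xs: "xs \<noteq> []" "distinct xs" "hd xs = p" "last xs = p"
    unfolding is_path_def is_walk_def by auto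
  have "length xs = 1"
  proof (rule ccontr)
    assume "length xs \<noteq> 1"
    then have "length xs \<ge> 2" using xs(1) by (cases xs) (auto simp: Suc_le_eq)
    then have "xs ! 0 \<noteq> xs ! (length xs - 1)"
      using xs(2) by (subst nth_eq_iff_index_eq) auto
    then show False using xs by (simp add: hd_conv_nth last_conv_nth)
  qed
  then show "xs = [p]" using xs by (cases xs) auto
qed (auto simp: is_path_def is_walk_def)

lemma path_length_rev: "path_length len (rev xs) = path_length len xs"
proof -
  let ?n = "length xs"
  let ?f = "\<lambda>j. len {xs ! j, xs ! Suc j}"
  have "path_length len (rev xs) = (\<Sum>i<?n - 1. ?f (?n - 1 - Suc i))"
    unfolding path_length_def
    by (rule sum.cong) (auto simp: rev_nth insert_commute Suc_diff_Suc numeral_2_eq_2)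
  also have "\<dots> = sum ?f {..<?n - 1}" by (rule sum.nat_diff_reindex)
  finally show ?thesis unfolding path_length_def .
qed

lemma path_length_Cons:
  "ys \<noteq> [] \<Longrightarrow> path_length len (x # ys) = len {x, hd ys} + path_length len ys"
  unfolding path_length_def
  by (cases ys) (simp_all add: sum.lessThan_Suc_shift del: sum.lessThan_Suc)

lemma path_length_nonneg:
  assumes "is_walk E xs" "\<forall>e\<in>E. len e > 0"
  shows "path_length len xs \<ge> 0"
  unfolding path_length_def
  using assms unfolding is_walk_def by (intro sum_nonneg) (fastforce simp: less_imp_le)

lemma dist_graph_commute: "dist_graph E len p q = dist_graph E len q p"
proof -
  have "{path_length len xs |xs. is_path E p q xs} = {path_length len xs |xs. is_path E q p xs}"
    by (metis path_length_rev is_path_rev)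
  then show ?thesis unfolding dist_graph_def by simp
qed

lemma dist_graph_self: "dist_graph E len p p = 0"
  unfolding dist_graph_def is_path_same_iff by (simp add: path_length_def)

lemma metrized_graph_edge_subset: "metrized_graph V E len \<Longrightarrow> e \<in> E \<Longrightarrow> e \<subseteq> V"
  unfolding metrized_graph_def by blast

lemma metrized_graph_finite_edges:
  assumes "metrized_graph V E len"
  shows "finite E"
proof (rule finite_subset)
  show "E \<subseteq> Pow V" using assms unfolding metrized_graph_def by blast
  show "finite (Pow V)" using assms unfolding metrized_graph_def by simp
qed

definition leaf_edge :: "'a set set \<Rightarrow> 'a \<Rightarrow> 'a \<Rightarrow> bool" where
  "leaf_edge E x y \<longleftrightarrow> x \<noteq> y \<and> {x, y} \<in> E \<and> (\<forall>e\<in>E. x \<in> e \<longrightarrow> e = {x, y})"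

lemma leaf_edgeD:
  assumes "leaf_edge E x y"
  shows "x \<noteq> y" "{x, y} \<in> E" "e \<in> E \<Longrightarrow> x \<in> e \<Longrightarrow> e = {x, y}"
  using assms unfolding leaf_edge_def by blast+

lemma distinct_walk_length_le_card:
  assumes "finite V" "\<forall>e\<in>E. e \<subseteq> V" "is_walk E xs" "distinct xs" "length xs \<ge> 2"
  shows "length xs \<le> card V"
  using assms is_walk_set_subset card_mono distinct_card by metis

lemma last_of_longest_walk_is_leaf:
  assumes acyclic: "acyclic_graph E" and edges: "\<forall>e\<in>E. card e = 2"
    and xs: "is_walk E xs" "distinct xs" "length xs \<ge> 2"
    and longest: "\<And>ys. is_walk E ys \<Longrightarrow> distinct ys \<Longrightarrow> length ys \<le> length xs"
  shows "leaf_edge E (last xs) (xs ! (length xs - 2))"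
proof -
  define n where "n = length xs"
  define x where "x = last xs"
  define y where "y = xs ! (n - 2)"
  have x_nth: "x = xs ! (n - 1)" unfolding x_def n_def using xs(3) by (intro last_conv_nth) auto
  have "{xs ! (n - 2), xs ! Suc (n - 2)} \<in> E"
    using xs(1,3) unfolding is_walk_def n_def by simp
  moreover have "Suc (n - 2) = n - 1" using xs(3) unfolding n_def by simp
  ultimately have xy: "{x, y} \<in> E" unfolding x_nth y_def by (simp add: insert_commute)
  have "x \<noteq> y" unfolding x_nth y_def using xs(2,3) unfolding n_def
    by (subst nth_eq_iff_index_eq) auto
  moreover have "e = {x, y}" if e: "e \<in> E" "x \<in> e" for e
  proof -
    obtain z where ez: "e = {x, z}" "z \<noteq> x"
      using edges e by (metis card_2_iff insert_commute insertE singletonD)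
    have "z \<in> set xs"
    proof (rule ccontr)
      assume "z \<notin> set xs"
      then have "is_walk E (xs @ [z])" "distinct (xs @ [z])"
        using is_walk_snoc[OF xs(1)] e ez xs(2) unfolding x_def by auto
      then show False using longest by fastforce
    qed
    then obtain i where i: "i < n" "xs ! i = z" unfolding n_def by (auto simp: in_set_conv_nth)
    have "i \<noteq> n - 1" using i ez x_nth by auto
    moreover have "i + 3 > n" \<comment> \<open>otherwise e closes the cycle drop i xs\<close>
    proof (rule ccontr)
      assume "\<not> i + 3 > n"
      then have "length (drop i xs) \<ge> 3" "distinct (drop i xs)" "is_walk E (drop i xs)"
        "{last (drop i xs), hd (drop i xs)} \<in> E"
        using xs e ez i unfolding n_def x_def by (auto simp: is_walk_drop hd_drop_conv_nth)
      then show False using acyclic unfolding acyclic_graph_def by blast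
    qed
    ultimately have "i = n - 2" using i by linarith
    then show ?thesis using ez i y_def by simp
  qed
  ultimately show ?thesis using xy unfolding leaf_edge_def x_def y_def n_def by blast
qed

lemma tree_has_leaf_edge:
  assumes mg: "metrized_graph V E len" and tree: "is_tree V E" and card: "card V \<ge> 2"
  shows "\<exists>x y. leaf_edge E x y"
proof -
  have fin: "finite V" and edges: "\<forall>e\<in>E. e \<subseteq> V \<and> card e = 2"
    using mg unfolding metrized_graph_def by auto
  obtain a b where ab: "a \<in> V" "b \<in> V" "a \<noteq> b"
    using card fin card_le_Suc0_iff_eq[OF fin] by (metis not_less_eq_eq numeral_2_eq_2)
  then obtain zs where zs: "is_path E a b zs"
    using tree unfolding is_tree_def connected_graph_def by blast
  then have "length zs \<ge> 2"
    using ab(3) unfolding is_path_def is_walk_def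
    by (cases zs) (auto simp: Suc_le_eq)
  define P where "P k \<longleftrightarrow> (\<exists>xs. is_walk E xs \<and> distinct xs \<and> length xs \<ge> 2 \<and> length xs = k)" for k
  have "P (length zs)" using zs \<open>length zs \<ge> 2\<close> unfolding P_def is_path_def by blast
  moreover have "k \<le> card V" if "P k" for k
    using that fin edges distinct_walk_length_le_card unfolding P_def by blast
  ultimately obtain k where k: "P k" "\<And>k'. P k' \<Longrightarrow> k' \<le> k"
    using Nat.ex_has_greatest_nat[of P "length zs" "card V"] by blast
  then obtain xs where xs: "is_walk E xs" "distinct xs" "length xs \<ge> 2" "length xs = k"
    unfolding P_def by blast
  have "length ys \<le> length xs" if "is_walk E ys" "distinct ys" for ys
    using that k(2) xs unfolding P_def by (cases "length ys \<ge> 2") auto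
  moreover have "acyclic_graph E" using tree unfolding is_tree_def by blast
  ultimately have "leaf_edge E (last xs) (xs ! (length xs - 2))"
    using last_of_longest_walk_is_leaf xs(1-3) edges by blast
  then show ?thesis by blast
qed

lemma leaf_edge_adjacent: "leaf_edge E x y \<Longrightarrow> {x, z} \<in> E \<Longrightarrow> z \<noteq> x \<Longrightarrow> z = y"
  by (drule leaf_edgeD(3)) (auto simp: doubleton_eq_iff)

lemma leaf_notin_path:
  assumes leaf: "leaf_edge E x y" and path: "is_path E p q xs" and "p \<noteq> x" "q \<noteq> x"
  shows "x \<notin> set xs"
proof
  assume "x \<in> set xs"
  then obtain i where i: "i < length xs" "xs ! i = x" by (auto simp: in_set_conv_nth)
  have walk: "\<forall>i. Suc i < length xs \<longrightarrow> {xs ! i, xs ! Suc i} \<in> E" and "distinct xs"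
    using path unfolding is_path_def is_walk_def by auto
  have "xs ! 0 \<noteq> x" "xs ! (length xs - 1) \<noteq> x"
    using path \<open>p \<noteq> x\<close> \<open>q \<noteq> x\<close> unfolding is_path_def is_walk_def
    by (auto simp: hd_conv_nth last_conv_nth)
  then have "i \<noteq> 0" "i \<noteq> length xs - 1" using i(2) by metis+
  then have i': "Suc (i - 1) = i" "Suc i < length xs" using i by auto
  have "{x, xs ! (i - 1)} \<in> E" "{x, xs ! Suc i} \<in> E"
    using walk[rule_format, of "i - 1"] walk[rule_format, of i] i i' by (simp_all add: insert_commute)
  moreover have "xs ! (i - 1) \<noteq> x" "xs ! Suc i \<noteq> x"
    using \<open>distinct xs\<close> i i' by (auto simp: nth_eq_iff_index_eq simp flip: i(2))
  ultimately have "xs ! (i - 1) = y" "xs ! Suc i = y"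
    using leaf_edge_adjacent[OF leaf] by blast+
  moreover have "xs ! (i - 1) \<noteq> xs ! Suc i"
    using \<open>distinct xs\<close> i' by (auto simp: nth_eq_iff_index_eq)
  ultimately show False by simp
qed

lemma is_path_remove_leaf_iff:
  assumes "leaf_edge E x y" "p \<noteq> x" "q \<noteq> x"
  shows "is_path (E - {{x, y}}) p q xs \<longleftrightarrow> is_path E p q xs"
proof
  assume "is_path (E - {{x, y}}) p q xs"
  then show "is_path E p q xs" unfolding is_path_def using is_walk_mono by blast
next
  assume path: "is_path E p q xs"
  have "x \<notin> set xs" using leaf_notin_path[OF assms(1) path assms(2,3)] .
  then have "{xs ! i, xs ! Suc i} \<in> E - {{x, y}}" if "Suc i < length xs" for i
    using path that unfolding is_path_def is_walk_def by force
  then show "is_path (E - {{x, y}}) p q xs" using path unfolding is_path_def is_walk_def by blast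
qed

lemma dist_graph_remove_leaf:
  "leaf_edge E x y \<Longrightarrow> p \<noteq> x \<Longrightarrow> q \<noteq> x \<Longrightarrow>
    dist_graph (E - {{x, y}}) len p q = dist_graph E len p q"
  unfolding dist_graph_def by (simp add: is_path_remove_leaf_iff)

lemma is_path_from_leaf_iff:
  assumes leaf: "leaf_edge E x y" and "q \<noteq> x"
  shows "is_path E x q xs \<longleftrightarrow> (\<exists>ys. xs = x # ys \<and> is_path E y q ys)"
proof
  assume path: "is_path E x q xs"
  then obtain ys where xs: "xs = x # ys" unfolding is_path_def is_walk_def by (cases xs) auto
  have "ys \<noteq> []" using path xs \<open>q \<noteq> x\<close> unfolding is_path_def by auto
  then have "{x, hd ys} \<in> E" "is_walk E ys" "hd ys \<noteq> x"
    using path unfolding xs is_path_def is_walk_Cons by auto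
  then have "hd ys = y" using leaf_edge_adjacent[OF leaf] by blast
  then show "\<exists>ys. xs = x # ys \<and> is_path E y q ys"
    using path \<open>ys \<noteq> []\<close> \<open>is_walk E ys\<close> unfolding xs is_path_def by auto
next
  assume "\<exists>ys. xs = x # ys \<and> is_path E y q ys"
  then obtain ys where xs: "xs = x # ys" and path: "is_path E y q ys" by blast
  have "x \<notin> set ys" using leaf_notin_path[OF leaf path] leaf_edgeD(1)[OF leaf] \<open>q \<noteq> x\<close> by auto
  moreover have "ys \<noteq> []" using path unfolding is_path_def is_walk_def by blast
  ultimately show "is_path E x q xs"
    using path leaf_edgeD(2)[OF leaf] unfolding xs is_path_def is_walk_Cons by auto
qed

lemma dist_graph_from_leaf:
  assumes leaf: "leaf_edge E x y" and "q \<noteq> x"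
    and pos: "\<forall>e\<in>E. len e > 0" and reach: "\<exists>ys. is_path E y q ys"
  shows "dist_graph E len x q = len {x, y} + dist_graph E len y q"
proof -
  let ?P = "{ys. is_path E y q ys}"
  have "bdd_below (path_length len ` ?P)"
    using path_length_nonneg pos unfolding is_path_def by (intro bdd_belowI[of _ 0]) auto
  then have "(INF ys\<in>?P. len {x, y} + path_length len ys) = len {x, y} + (INF ys\<in>?P. path_length len ys)"
    using reach by (intro Inf_add_eq) auto
  moreover have "path_length len (x # ys) = len {x, y} + path_length len ys" if "ys \<in> ?P" for ys
    using that path_length_Cons[of ys len x] unfolding is_path_def is_walk_def by auto
  then have "{path_length len xs |xs. is_path E x q xs} = (\<lambda>ys. len {x, y} + path_length len ys) ` ?P"
    unfolding is_path_from_leaf_iff[OF leaf \<open>q \<noteq> x\<close>] by force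
  moreover have "{path_length len xs |xs. is_path E y q xs} = path_length len ` ?P" by auto
  ultimately show ?thesis unfolding dist_graph_def by simp
qed

lemma metrized_graph_remove_leaf:
  assumes mg: "metrized_graph V E len" and leaf: "leaf_edge E x y"
  shows "metrized_graph (V - {x}) (E - {{x, y}}) len"
  unfolding metrized_graph_def
proof (intro conjI ballI)
  have edges: "\<forall>e\<in>E. e \<subseteq> V \<and> card e = 2 \<and> len e > 0" using mg unfolding metrized_graph_def by blast
  show "finite (V - {x})" using mg unfolding metrized_graph_def by blast
  show "V - {x} \<noteq> {}" using edges leaf_edgeD(1,2)[OF leaf] by blast
  fix e assume e: "e \<in> E - {{x, y}}"
  then have "x \<notin> e" using leaf_edgeD(3)[OF leaf] by blast
  then show "e \<subseteq> V - {x}" using e edges by blast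
  show "card e = 2" "len e > 0" using e edges by blast+
qed

lemma is_tree_remove_leaf:
  assumes tree: "is_tree V E" and leaf: "leaf_edge E x y"
  shows "is_tree (V - {x}) (E - {{x, y}})"
  unfolding is_tree_def
proof
  show "connected_graph (V - {x}) (E - {{x, y}})"
    unfolding connected_graph_def
  proof (intro ballI)
    fix p q assume "p \<in> V - {x}" "q \<in> V - {x}"
    moreover from this obtain xs where "is_path E p q xs"
      using tree unfolding is_tree_def connected_graph_def by blast
    ultimately show "\<exists>xs. is_path (E - {{x, y}}) p q xs"
      using is_path_remove_leaf_iff[OF leaf] by blast
  qed
  have "is_walk E xs" if "is_walk (E - {{x, y}}) xs" for xs
    using that is_walk_mono by blast
  then show "acyclic_graph (E - {{x, y}})"
    using tree unfolding is_tree_def acyclic_graph_def by blast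
qed

lemma tree_leaf_induct [consumes 2, case_names singleton remove_leaf]:
  assumes "metrized_graph V E len" and "is_tree V E"
    and singleton: "\<And>a. P {a} {}"
    and remove_leaf: "\<And>V E x y. metrized_graph V E len \<Longrightarrow> is_tree V E \<Longrightarrow> leaf_edge E x y \<Longrightarrow>
      x \<in> V \<Longrightarrow> P (V - {x}) (E - {{x, y}}) \<Longrightarrow> P V E"
  shows "P V E"
  using assms(1,2)
proof (induction "card V" arbitrary: V E rule: less_induct)
  case less
  have fin: "finite V" and "V \<noteq> {}" and edges: "\<forall>e\<in>E. e \<subseteq> V \<and> card e = 2"
    using less.prems(1) unfolding metrized_graph_def by auto
  then have "card V \<noteq> 0" by simp
  then consider "card V = 1" | "card V \<ge> 2" by linarith
  then show ?case
  proof cases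
    case 1
    then obtain a where "V = {a}" by (rule card_1_singletonE)
    moreover have "E = {}"
    proof (rule ccontr)
      assume "E \<noteq> {}"
      then obtain e where "e \<in> E" by blast
      then show False using edges card_mono[OF fin, of e] 1 by auto
    qed
    ultimately show ?thesis using singleton by simp
  next
    case 2
    then obtain x y where leaf: "leaf_edge E x y" using tree_has_leaf_edge less.prems by blast
    then have "x \<in> V" using edges leaf_edgeD(2)[OF leaf] by blast
    have "P (V - {x}) (E - {{x, y}})"
      using less.hyps[OF card_Diff1_less[OF fin \<open>x \<in> V\<close>]
          metrized_graph_remove_leaf[OF less.prems(1) leaf] is_tree_remove_leaf[OF less.prems(2) leaf]] .
    then show ?thesis by (rule remove_leaf[OF less.prems leaf \<open>x \<in> V\<close>])
  qed
qed

lemma card_edges_tree: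
  assumes "metrized_graph V E len" and "is_tree V E"
  shows "card E = card V - 1"
  using assms
proof (induction rule: tree_leaf_induct)
  case (remove_leaf V E x y)
  have fin: "finite V" using remove_leaf.hyps(1) unfolding metrized_graph_def by blast
  have xy: "{x, y} \<in> E" using leaf_edgeD(2)[OF remove_leaf.hyps(3)] .
  have "y \<in> V - {x}"
    using metrized_graph_edge_subset[OF remove_leaf.hyps(1) xy] leaf_edgeD(1)[OF remove_leaf.hyps(3)] by simp
  then have "card (V - {x}) > 0" using fin card_gt_0_iff by blast
  moreover have "card (E - {{x, y}}) = card E - 1" "card E > 0"
    using metrized_graph_finite_edges[OF remove_leaf.hyps(1)] xy card_gt_0_iff by auto
  moreover have "card (V - {x}) = card V - 1" using remove_leaf.hyps(4) fin by simp
  ultimately show ?case using remove_leaf.IH by linarith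
qed simp

locale tree_leaf =
  fixes V :: "'a set" and E :: "'a set set" and len :: "'a set \<Rightarrow> real" and x y :: 'a
  assumes metrized: "metrized_graph V E len" and tree: "is_tree V E" and leaf: "leaf_edge E x y"
begin

lemma finite_vertices: "finite V"
  using metrized unfolding metrized_graph_def by blast

lemma finite_edges: "finite E"
  using metrized_graph_finite_edges[OF metrized] .

lemma leaf_in_edges: "{x, y} \<in> E"
  using leaf_edgeD(2)[OF leaf] .

lemma leaf_in_vertices: "x \<in> V"
  using metrized_graph_edge_subset[OF metrized leaf_in_edges] by simp

lemma neighbour_in_remaining: "y \<in> V - {x}"
  using metrized_graph_edge_subset[OF metrized leaf_in_edges] leaf_edgeD(1)[OF leaf] by simp

lemma remaining_edge_subset: "e \<in> E - {{x, y}} \<Longrightarrow> e \<subseteq> V - {x}"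
  using metrized_graph_edge_subset[OF metrized_graph_remove_leaf[OF metrized leaf]] .

lemma dist_graph_leaf:
  assumes "q \<in> V - {x}"
  shows "dist_graph E len x q = len {x, y} + dist_graph E len y q"
proof (rule dist_graph_from_leaf[OF leaf])
  show "q \<noteq> x" "\<exists>ys. is_path E y q ys"
    using assms neighbour_in_remaining tree unfolding is_tree_def connected_graph_def by auto
  show "\<forall>e\<in>E. len e > 0" using metrized unfolding metrized_graph_def by blast
qed

abbreviation "d \<equiv> dist_graph E len"

lemma sum_edge_endpoints_dist_remaining:
  assumes p: "p \<in> V - {x}"
    and IH: "(\<Sum>e\<in>E - {{x, y}}. \<Sum>q\<in>e. dist_graph (E - {{x, y}}) len p q) =
      2 * (\<Sum>q\<in>V - {x}. dist_graph (E - {{x, y}}) len p q) - total_length (E - {{x, y}}) len"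
  shows "(\<Sum>e\<in>E - {{x, y}}. \<Sum>q\<in>e. d p q) = 2 * (\<Sum>q\<in>V - {x}. d p q) - total_length (E - {{x, y}}) len"
proof -
  have same: "dist_graph (E - {{x, y}}) len p q = d p q" if "q \<in> V - {x}" for q
    using dist_graph_remove_leaf[OF leaf] p that by simp
  have "(\<Sum>q\<in>e. dist_graph (E - {{x, y}}) len p q) = (\<Sum>q\<in>e. d p q)" if "e \<in> E - {{x, y}}" for e
    using remaining_edge_subset[OF that] same by (intro sum.cong) auto
  then show ?thesis using IH same by simp
qed

lemma split_edge_sum: "(\<Sum>e\<in>E. \<Sum>q\<in>e. d p q) = d p x + d p y + (\<Sum>e\<in>E - {{x, y}}. \<Sum>q\<in>e. d p q)"
  using sum.remove[OF finite_edges leaf_in_edges, of "sum (d p)"] leaf_edgeD(1)[OF leaf] by simp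

lemma split_vertex_sum: "(\<Sum>q\<in>V. d p q) = d p x + (\<Sum>q\<in>V - {x}. d p q)"
  using sum.remove[OF finite_vertices leaf_in_vertices] .

lemma split_total_length: "total_length E len = len {x, y} + total_length (E - {{x, y}}) len"
  unfolding total_length_def using sum.remove[OF finite_edges leaf_in_edges] .

lemma sum_edge_endpoints_dist_step:
  assumes p: "p \<in> V"
    and IH: "\<And>p. p \<in> V - {x} \<Longrightarrow> (\<Sum>e\<in>E - {{x, y}}. \<Sum>q\<in>e. d p q) =
      2 * (\<Sum>q\<in>V - {x}. d p q) - total_length (E - {{x, y}}) len"
  shows "(\<Sum>e\<in>E. \<Sum>q\<in>e. d p q) = 2 * (\<Sum>q\<in>V. d p q) - total_length E len"
proof (cases "p = x")
  case False
  then have "d p x = len {x, y} + d p y"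
    using p dist_graph_leaf[of p] dist_graph_commute by (metis Diff_iff singletonD)
  then show ?thesis
    using split_edge_sum split_vertex_sum split_total_length IH[of p] p False by simp
next
  case True
  let ?L = "len {x, y}" and ?n = "real (card (V - {x}))"
  have "card (E - {{x, y}}) = card (V - {x}) - 1"
    using card_edges_tree metrized_graph_remove_leaf[OF metrized leaf] is_tree_remove_leaf[OF tree leaf] by blast
  moreover have "card (V - {x}) > 0" using neighbour_in_remaining finite_vertices card_gt_0_iff by blast
  ultimately have card_remaining: "real (card (E - {{x, y}})) = ?n - 1" by simp
  have "(\<Sum>q\<in>e. d x q) = 2 * ?L + (\<Sum>q\<in>e. d y q)" if "e \<in> E - {{x, y}}" for e
  proof -
    have "(\<Sum>q\<in>e. d x q) = (\<Sum>q\<in>e. ?L + d y q)"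
      using remaining_edge_subset[OF that] dist_graph_leaf by (intro sum.cong) auto
    also have "\<dots> = 2 * ?L + (\<Sum>q\<in>e. d y q)"
      using that metrized unfolding metrized_graph_def by (simp add: sum.distrib)
    finally show ?thesis .
  qed
  then have "(\<Sum>e\<in>E - {{x, y}}. \<Sum>q\<in>e. d x q) = 2 * ?L * (?n - 1) + (\<Sum>e\<in>E - {{x, y}}. \<Sum>q\<in>e. d y q)"
    using card_remaining by (simp add: sum.distrib)
  moreover have "(\<Sum>q\<in>V - {x}. d x q) = ?L * ?n + (\<Sum>q\<in>V - {x}. d y q)"
    using dist_graph_leaf by (simp add: sum.distrib)
  moreover have "d x y = ?L" "d x x = 0"
    using dist_graph_leaf[OF neighbour_in_remaining] by (simp_all add: dist_graph_self)
  ultimately show ?thesis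
    using True split_edge_sum split_vertex_sum split_total_length IH[OF neighbour_in_remaining]
    by (simp add: algebra_simps)
qed

end

lemma sum_edge_endpoints_dist:
  assumes "metrized_graph V E len" and "is_tree V E" and "p \<in> V"
  shows "(\<Sum>e\<in>E. \<Sum>q\<in>e. dist_graph E len p q) =
    2 * (\<Sum>q\<in>V. dist_graph E len p q) - total_length E len"
  using assms
proof (induction arbitrary: p rule: tree_leaf_induct)
  case (singleton a)
  then show ?case by (simp add: dist_graph_self total_length_def)
next
  case (remove_leaf V E x y)
  interpret tree_leaf V E len x y using remove_leaf.hyps(1-3) by unfold_locales
  show ?case
    using sum_edge_endpoints_dist_step[OF remove_leaf.prems]
      sum_edge_endpoints_dist_remaining remove_leaf.IH by blast
qed

lemma sum_valence_weighted:
  assumes "finite V" and "\<forall>e\<in>E. e \<subseteq> V"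
  shows "(\<Sum>q\<in>V. real (valence E q) * f q) = (\<Sum>e\<in>E. \<Sum>q\<in>e. f q)"
proof -
  have "finite E" using finite_subset[of E "Pow V"] assms by auto
  have "(\<Sum>e\<in>E. \<Sum>q\<in>e. f q) = (\<Sum>e\<in>E. \<Sum>q\<in>V. if q \<in> e then f q else 0)"
  proof (rule sum.cong[OF refl])
    fix e assume "e \<in> E"
    then have "V \<inter> e = e" using assms(2) by blast
    then show "(\<Sum>q\<in>e. f q) = (\<Sum>q\<in>V. if q \<in> e then f q else 0)"
      using sum.inter_restrict[OF assms(1), of f e] by simp
  qed
  also have "\<dots> = (\<Sum>q\<in>V. \<Sum>e\<in>E. if q \<in> e then f q else 0)" by (rule sum.swap)
  also have "\<dots> = (\<Sum>q\<in>V. real (valence E q) * f q)"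
  proof (rule sum.cong[OF refl])
    fix q
    have "(\<Sum>e\<in>E. if q \<in> e then f q else 0) = (\<Sum>e\<in>{e\<in>E. q \<in> e}. f q)"
      using sum.inter_filter[OF \<open>finite E\<close>, of "\<lambda>_. f q" "\<lambda>e. q \<in> e"] by simp
    then show "(\<Sum>e\<in>E. if q \<in> e then f q else 0) = real (valence E q) * f q"
      unfolding valence_def by simp
  qed
  finally show ?thesis by simp
qed

lemma sum_valence:
  assumes "finite V" and "\<forall>e\<in>E. e \<subseteq> V \<and> card e = 2"
  shows "(\<Sum>q\<in>V. real (valence E q)) = 2 * real (card E)"
  using sum_valence_weighted[of V E "\<lambda>_. 1"] assms by simp

lemma weighted_double_sum:
  fixes w :: "'a \<Rightarrow> real" and d :: "'a \<Rightarrow> 'a \<Rightarrow> real"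
  assumes sym: "\<And>p q. d p q = d q p"
    and weighted: "\<And>p. p \<in> V \<Longrightarrow> (\<Sum>q\<in>V. w q * d p q) = 2 * (\<Sum>q\<in>V. d p q) - c"
    and total: "(\<Sum>p\<in>V. w p) = 2 * (real (card V) - 1)"
  shows "(\<Sum>p\<in>V. \<Sum>q\<in>V. w p * w q * d p q) = 4 * (\<Sum>p\<in>V. \<Sum>q\<in>V. d p q) - (4 * real (card V) - 2) * c"
proof -
  let ?D = "\<lambda>p. \<Sum>q\<in>V. d p q"
  have "(\<Sum>p\<in>V. w p * ?D p) = (\<Sum>q\<in>V. \<Sum>p\<in>V. w p * d q p)"
    unfolding sum_distrib_left by (subst sum.swap) (simp add: sym)
  also have "\<dots> = (\<Sum>q\<in>V. 2 * ?D q - c)" using weighted by (intro sum.cong) auto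
  finally have weighted_sum: "(\<Sum>p\<in>V. w p * ?D p) = 2 * (\<Sum>p\<in>V. ?D p) - real (card V) * c"
    by (simp add: sum_subtractf sum_distrib_left)
  have "(\<Sum>p\<in>V. \<Sum>q\<in>V. w p * w q * d p q) = (\<Sum>p\<in>V. w p * (2 * ?D p - c))"
    using weighted by (intro sum.cong) (simp_all add: mult.assoc flip: sum_distrib_left)
  also have "\<dots> = (\<Sum>p\<in>V. 2 * (w p * ?D p) - c * w p)"
    by (intro sum.cong) (simp_all add: algebra_simps)
  also have "\<dots> = 2 * (\<Sum>p\<in>V. w p * ?D p) - c * (\<Sum>p\<in>V. w p)"
    by (simp only: sum_subtractf flip: sum_distrib_left)
  finally show ?thesis unfolding weighted_sum total by (simp add: algebra_simps)
qed
theorem theorem4p3: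
  fixes V :: "'a set" and E :: "'a set set" and len :: "'a set \<Rightarrow> real"
  assumes "metrized_graph V E len" and "is_tree V E"
  shows "wiener_index V E len =
           (2 * real (card V) - 1) / 4 * total_length E len
           + 1/8 * (\<Sum>p\<in>V. \<Sum>q\<in>V. real (valence E p) * real (valence E q) * resistance_tree E len p q)
       \<and> ((\<forall>e\<in>E. len e = 1) \<longrightarrow> wiener_index V E len =
           (2 * real (card V) - 1) * (real (card V) - 1) / 4
           + 1/8 * (\<Sum>p\<in>V. \<Sum>q\<in>V. real (valence E p) * real (valence E q) * resistance_tree E len p q))"
proof -
  have fin: "finite V" and "V \<noteq> {}" and edges: "\<forall>e\<in>E. e \<subseteq> V \<and> card e = 2"
    using assms(1) unfolding metrized_graph_def by auto
  have edge_subset: "\<forall>e\<in>E. e \<subseteq> V" using edges by blast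
  have "card V > 0" using fin \<open>V \<noteq> {}\<close> by (simp add: card_gt_0_iff)
  then have card_E: "real (card E) = real (card V) - 1"
    using card_edges_tree[OF assms] by simp
  have "(\<Sum>p\<in>V. \<Sum>q\<in>V. real (valence E p) * real (valence E q) * resistance_tree E len p q) =
      4 * (\<Sum>p\<in>V. \<Sum>q\<in>V. dist_graph E len p q) - (4 * real (card V) - 2) * total_length E len"
    unfolding resistance_tree_def
  proof (rule weighted_double_sum)
    show "(\<Sum>q\<in>V. real (valence E q) * dist_graph E len p q) =
        2 * (\<Sum>q\<in>V. dist_graph E len p q) - total_length E len" if "p \<in> V" for p
      using sum_valence_weighted[OF fin edge_subset] sum_edge_endpoints_dist[OF assms that] by simp
    show "(\<Sum>p\<in>V. real (valence E p)) = 2 * (real (card V) - 1)"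
      using sum_valence[OF fin edges] card_E by simp
  qed (rule dist_graph_commute)
  then have "wiener_index V E len = (2 * real (card V) - 1) / 4 * total_length E len
      + 1/8 * (\<Sum>p\<in>V. \<Sum>q\<in>V. real (valence E p) * real (valence E q) * resistance_tree E len p q)"
    unfolding wiener_index_def by (simp add: field_simps)
  moreover have "total_length E len = real (card V) - 1" if "\<forall>e\<in>E. len e = 1"
    using that card_E unfolding total_length_def by simp
  ultimately show ?thesis by simp
qed

end
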